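(* Let $j\ge2$, $\lambda\in I_j$, $\theta\in(\mathbb R^d)^{j-1}$. (i) If $d=1$ and $\frac12<\alpha<2$, then $E[S_1^{-1/2}L^{(\alpha)}_j(\lambda,\theta)]<\infty$. (ii) If $d=1$ and $\frac32<\alpha<2$, or $d=2$ and $1<\alpha<2$, or $d=3$ and $\frac12<\alpha<2$, then $E[S_1^{-d/2}\{L^{(\alpha)}_j(\lambda,\theta)\}^2]<\infty$.
   Context: $\{S_t\}$ is the $\alpha/2$-stable subordinator ($S_0=0$, nondecreasing, stationary independent increments, $Ee^{-\lambda S_t}=e^{-t\lambda^{\alpha/2}}$). $I_j=\{0<\lambda_j<\dots<\lambda_1<1\}$; for $\lambda\in I_j$, $S^*_{\lambda_k-\lambda_{k+1}}=S_{\lambda_k-\lambda_j}-S_{\lambda_{k+1}-\lambda_j}$ ($1\le k\le j-1$). For $\theta=(\theta_1,\dots,\theta_{j-1})\in(\mathbb R^d)^{j-1}$, $\gamma_k=\theta_1+\dots+\theta_k$ and $L^{(\alpha)}_j(\lambda,\theta)=\sum_{k=1}^{j-1}S^*_{\lambda_k-\lambda_{k+1}}|\gamma_k|^2-S_1^{-1}|\sum_{k=1}^{j-1}S^*_{\lambda_k-\lambda_{k+1}}\gamma_k|^2$. *)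

theory Defs
  imports "HOL-Probability.Probability"
begin

text \<open>An (beta)-stable subordinator on a probability space M, with Laplace exponent
  E exp(-l S_t) = exp(-t l^beta).  In the paper beta = alpha/2.\<close>
definition stable_subordinator :: "'w measure \<Rightarrow> (real \<Rightarrow> 'w \<Rightarrow> real) \<Rightarrow> real \<Rightarrow> bool" where
  "stable_subordinator M S \<beta> \<longleftrightarrow>
     prob_space M \<and>
     (\<forall>t\<ge>0. S t \<in> borel_measurable M) \<and>
     (\<forall>\<omega>\<in>space M. S 0 \<omega> = 0 \<and> mono_on {0..} (\<lambda>t. S t \<omega>)) \<and>
     (\<forall>s t. 0 \<le> s \<longrightarrow> s \<le> t \<longrightarrow>
        distr M borel (\<lambda>\<omega>. S t \<omega> - S s \<omega>) = distr M borel (S (t - s))) \<and>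
     (\<forall>(n::nat) (\<tau>::nat \<Rightarrow> real). 0 \<le> \<tau> 0 \<longrightarrow> (\<forall>i<n. \<tau> i \<le> \<tau> (Suc i)) \<longrightarrow>
        prob_space.indep_vars M (\<lambda>_. borel) (\<lambda>i \<omega>. S (\<tau> (Suc i)) \<omega> - S (\<tau> i) \<omega>) {..<n}) \<and>
     (\<forall>t\<ge>0. \<forall>l\<ge>0. prob_space.expectation M (\<lambda>\<omega>. exp (- l * S t \<omega>)) = exp (- t * l powr \<beta>))"

definition I_set :: "nat \<Rightarrow> (nat \<Rightarrow> real) set" where
  "I_set j = {lam. 0 < lam j \<and> lam 1 < 1 \<and> (\<forall>k\<in>{1..<j}. lam (Suc k) < lam k)}"

text \<open>S*_{lam_k - lam_{k+1}} = S_{lam_k - lam_j} - S_{lam_{k+1} - lam_j}.\<close>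
definition Sstar :: "(real \<Rightarrow> 'w \<Rightarrow> real) \<Rightarrow> nat \<Rightarrow> (nat \<Rightarrow> real) \<Rightarrow> nat \<Rightarrow> 'w \<Rightarrow> real" where
  "Sstar S j lam k \<omega> = S (lam k - lam j) \<omega> - S (lam (Suc k) - lam j) \<omega>"

definition gam :: "(nat \<Rightarrow> 'v::real_vector) \<Rightarrow> nat \<Rightarrow> 'v" where
  "gam \<theta> k = (\<Sum>i=1..k. \<theta> i)"

definition Lalpha :: "(real \<Rightarrow> 'w \<Rightarrow> real) \<Rightarrow> nat \<Rightarrow> (nat \<Rightarrow> real) \<Rightarrow> (nat \<Rightarrow> real^'d) \<Rightarrow> 'w \<Rightarrow> real" where
  "Lalpha S j lam \<theta> \<omega> =
     (\<Sum>k=1..<j. Sstar S j lam k \<omega> * (norm (gam \<theta> k))\<^sup>2)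
     - inverse (S 1 \<omega>) * (norm (\<Sum>k=1..<j. Sstar S j lam k \<omega> *\<^sub>R gam \<theta> k))\<^sup>2"

end

theory Submission
  imports Defs
begin

(*
  Cut [0,1] at the times 0 < lam_{j-1} - lam_j < ... < lam_1 - lam_j < 1; the j increments
  x_i of S over the pieces are independent, sum to S_1, and every S*_{lam_k - lam_{k+1}} is
  one of them.  Hence L is a weighted dispersion of the vectors gamma_k with weights x_i, and
     S_1 L = 1/2 sum_{a,b} x_a x_b |h_a - h_b|^2 <= 2G sum_{a <> b} x_a x_b,  G = sum_k |gamma_k|^2.
  As x_a <= S_1, the negative powers of S_1 in the claim are absorbed into products
  x_a^p x_b^p over distinct pairs (p = 1/4 in (i), p = (4 - d)/4 in (ii)), whose expectations
  factorise by independence.  Each factor is finite because a nonnegative X with Laplace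
  transform exp(-t l^beta) has E[X^q] < infinity for q < beta = alpha/2.
  The file proves, in order: this moment bound, its consequences for subordinator increments,
  the algebraic dispersion bounds, the rewriting of L through the increments, and finally
  the two parts of the corollary.
*)

section \<open>Fractional moments from the Laplace transform\<close>

text \<open>A pointwise dyadic majorant of \<open>x powr q\<close>: on \<open>2^(n-1) < x \<le> 2^n\<close> the n-th term
  alone dominates, since there \<open>1 - exp (-x/2^n) \<ge> 1/3\<close>.\<close>
lemma powr_le_dyadic_series:
  fixes x q :: real
  assumes "0 \<le> x" "0 < q"
  shows "ennreal (x powr q) \<le> 1 + (\<Sum>n. ennreal (3 * (2 powr q)^n * (1 - exp (- ((1/2)^n) * x))))"
proof (cases "x \<le> 1")
  case True
  then have "x powr q \<le> 1"
    using assms powr_mono2[of q x 1] by simp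
  then show ?thesis
    by (simp add: ennreal_le_1 add_increasing2)
next
  case False
  define n where "n = (LEAST n. x \<le> (2::real)^n)"
  have "\<exists>n. x \<le> (2::real)^n"
    using real_arch_pow[of 2 x] by (auto intro: less_imp_le)
  then have xn: "x \<le> 2^n"
    unfolding n_def by (rule LeastI_ex)
  have n0: "n \<noteq> 0"
    using xn False by (cases n) auto
  have "\<not> x \<le> 2^(n-1)"
    using n0 not_less_Least[of "n-1" "\<lambda>n. x \<le> (2::real)^n"] by (auto simp: n_def)
  then have "2^n < 2*x"
    using n0 by (cases n) auto
  then have half: "(1/2)^n * x > 1/2"
    by (simp add: power_one_over field_simps)
  have "1 + 1/2 \<le> exp (1/2::real)"
    using exp_ge_add_one_self[of "1/2"] by simp
  then have "exp (-(1/2::real)) \<le> 2/3"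
    by (simp add: exp_minus field_simps)
  moreover have "exp (- ((1/2)^n) * x) \<le> exp (-(1/2::real))"
    using half by simp
  ultimately have "exp (- ((1/2)^n) * x) \<le> 2/3"
    by linarith
  then have third: "1 \<le> 3 * (1 - exp (- ((1/2)^n) * x))"
    by (simp add: algebra_simps)
  have "x powr q \<le> (2^n) powr q"
    using xn assms by (simp add: powr_mono2)
  also have "\<dots> = (2 powr q)^n"
    by (simp add: powr_realpow[symmetric] powr_powr mult.commute)
  also have "\<dots> \<le> (2 powr q)^n * (3 * (1 - exp (- ((1/2)^n) * x)))"
    using mult_left_mono[OF third, of "(2 powr q)^n"] by simp
  finally have "ennreal (x powr q) \<le> ennreal (3 * (2 powr q)^n * (1 - exp (- ((1/2)^n) * x)))"
    by (intro ennreal_leI) (simp add: algebra_simps)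
  also have "\<dots> \<le> (\<Sum>n. ennreal (3 * (2 powr q)^n * (1 - exp (- ((1/2)^n) * x))))"
    using sum_le_suminf[of "\<lambda>n. ennreal (3 * (2 powr q)^n * (1 - exp (- ((1/2)^n) * x)))" "{n}"]
    by simp
  finally show ?thesis
    by (simp add: add_increasing)
qed

lemma laplace_tail_bound:
  fixes X :: "'w \<Rightarrow> real"
  assumes P: "prob_space M" and Xm: "X \<in> borel_measurable M"
    and X0: "\<And>\<omega>. \<omega> \<in> space M \<Longrightarrow> 0 \<le> X \<omega>"
    and L: "prob_space.expectation M (\<lambda>\<omega>. exp (- l * X \<omega>)) = exp (- t * l powr \<beta>)"
    and l: "0 \<le> l"
  shows "(\<integral>\<^sup>+\<omega>. ennreal (1 - exp (- l * X \<omega>)) \<partial>M) \<le> ennreal (t * l powr \<beta>)"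
proof -
  interpret prob_space M by (rule P)
  have bounded: "0 \<le> 1 - exp (- l * X \<omega>) \<and> exp (- l * X \<omega>) \<le> 1" if "\<omega> \<in> space M" for \<omega>
    using X0[OF that] l by simp
  have int_exp: "integrable M (\<lambda>\<omega>. exp (- l * X \<omega>))"
    by (rule integrable_const_bound[where B=1]) (use bounded Xm in \<open>auto intro!: AE_I2\<close>)
  then have int_tail: "integrable M (\<lambda>\<omega>. 1 - exp (- l * X \<omega>))"
    by auto
  have "(\<integral>\<^sup>+\<omega>. ennreal (1 - exp (- l * X \<omega>)) \<partial>M) = ennreal (expectation (\<lambda>\<omega>. 1 - exp (- l * X \<omega>)))"
    by (rule nn_integral_eq_integral[OF int_tail]) (use bounded in \<open>auto intro!: AE_I2\<close>)
  also have "expectation (\<lambda>\<omega>. 1 - exp (- l * X \<omega>)) = 1 - exp (- t * l powr \<beta>)"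
    using L int_exp by (simp add: prob_space)
  also have "\<dots> \<le> t * l powr \<beta>"
    using exp_ge_add_one_self[of "- t * l powr \<beta>"] by simp
  finally show ?thesis
    by (simp add: ennreal_leI)
qed

text \<open>All moments of order \<open>q < \<beta>\<close> of a variable with Laplace transform \<open>exp (- t l^\<beta>)\<close> are
  finite: integrating the dyadic majorant termwise gives a geometric series of ratio
  \<open>2^(q - \<beta>) < 1\<close>.\<close>
lemma laplace_moment_finite:
  fixes X :: "'w \<Rightarrow> real"
  assumes P: "prob_space M" and Xm: "X \<in> borel_measurable M"
    and X0: "\<And>\<omega>. \<omega> \<in> space M \<Longrightarrow> 0 \<le> X \<omega>"
    and L: "\<And>l. l \<ge> 0 \<Longrightarrow> prob_space.expectation M (\<lambda>\<omega>. exp (- l * X \<omega>)) = exp (- t * l powr \<beta>)"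
    and t: "0 \<le> t" and q: "0 < q" "q < \<beta>"
  shows "(\<integral>\<^sup>+\<omega>. ennreal (X \<omega> powr q) \<partial>M) < \<infinity>"
proof -
  interpret prob_space M by (rule P)
  define r where "r = (2::real) powr (q - \<beta>)"
  have r: "0 < r" "r < 1"
    using q unfolding r_def by (auto intro: powr_less_one)
  define f where "f n \<omega> = ennreal (3 * (2 powr q)^n * (1 - exp (- ((1/2)^n) * X \<omega>)))" for n \<omega>
  have fm: "f n \<in> borel_measurable M" for n
    unfolding f_def using Xm by measurable
  have term_bound: "integral\<^sup>N M (f n) \<le> ennreal (3 * t * r^n)" for n
  proof -
    define l :: real where "l = (1/2)^n"
    have "integral\<^sup>N M (f n) = (\<integral>\<^sup>+\<omega>. ennreal (3 * (2 powr q)^n) * ennreal (1 - exp (- l * X \<omega>)) \<partial>M)"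
      using X0 by (intro nn_integral_cong) (simp add: f_def l_def ennreal_mult)
    also have "\<dots> = ennreal (3 * (2 powr q)^n) * (\<integral>\<^sup>+\<omega>. ennreal (1 - exp (- l * X \<omega>)) \<partial>M)"
      by (rule nn_integral_cmult) (use Xm in measurable)
    also have "\<dots> \<le> ennreal (3 * (2 powr q)^n) * ennreal (t * l powr \<beta>)"
      by (intro mult_left_mono laplace_tail_bound[OF P Xm X0 L]) (auto simp: l_def)
    also have "\<dots> = ennreal (3 * t * ((2 powr q)^n * l powr \<beta>))"
      using t by (subst ennreal_mult[symmetric]) (auto simp: mult_ac)
    also have "(2 powr q)^n * l powr \<beta> = r^n"
      unfolding l_def r_def
      by (simp add: powr_realpow[symmetric] powr_powr powr_divide powr_diff field_simps powr_minus)
    finally show ?thesis .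
  qed
  have "(\<integral>\<^sup>+\<omega>. ennreal (X \<omega> powr q) \<partial>M) \<le> (\<integral>\<^sup>+\<omega>. 1 + (\<Sum>n. f n \<omega>) \<partial>M)"
    unfolding f_def by (intro nn_integral_mono powr_le_dyadic_series X0 q)
  also have "\<dots> = 1 + (\<Sum>n. integral\<^sup>N M (f n))"
    by (subst nn_integral_add)
       (auto simp: nn_integral_suminf fm emeasure_space_1 intro!: borel_measurable_suminf_order)
  also have "\<dots> \<le> 1 + (\<Sum>n. ennreal (3 * t * r^n))"
    by (intro add_left_mono suminf_le term_bound) auto
  also have "(\<Sum>n. ennreal (3 * t * r^n)) = ennreal (\<Sum>n. 3 * t * r^n)"
    by (rule suminf_ennreal2) (use t r in \<open>auto intro!: summable_mult summable_geometric\<close>)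
  also have "1 + ennreal (\<Sum>n. 3 * t * r^n) < \<infinity>"
    by (simp add: less_top[symmetric] infinity_ennreal_def)
  finally show ?thesis .
qed

section \<open>Increments of a stable subordinator\<close>

definition increments :: "(real \<Rightarrow> 'w \<Rightarrow> real) \<Rightarrow> (nat \<Rightarrow> real) \<Rightarrow> nat \<Rightarrow> 'w \<Rightarrow> real" where
  "increments S \<tau> i \<omega> = S (\<tau> (Suc i)) \<omega> - S (\<tau> i) \<omega>"

lemma subordinator_increment_nonneg:
  assumes "stable_subordinator M S \<beta>" "0 \<le> s" "s \<le> t" "\<omega> \<in> space M"
  shows "0 \<le> S t \<omega> - S s \<omega>"
proof -
  have "mono_on {0..} (\<lambda>t. S t \<omega>)"
    using assms(1,4) unfolding stable_subordinator_def by blast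
  then show ?thesis
    using assms(2,3) by (auto elim!: mono_onD)
qed

text \<open>By stationarity an increment over \<open>[s, t]\<close> has the law of \<open>S (t - s)\<close>, whose Laplace
  transform is \<open>exp (-(t - s) l^\<beta>)\<close>; hence its moments of order \<open>q < \<beta>\<close> are finite.\<close>
lemma subordinator_increment_moment:
  assumes SS: "stable_subordinator M S \<beta>" and st: "0 \<le> s" "s \<le> t" and q: "0 < q" "q < \<beta>"
  shows "(\<integral>\<^sup>+\<omega>. ennreal ((S t \<omega> - S s \<omega>) powr q) \<partial>M) < \<infinity>"
proof -
  note defs = SS[unfolded stable_subordinator_def]
  have P: "prob_space M" and meas: "\<And>u. u \<ge> 0 \<Longrightarrow> S u \<in> borel_measurable M"
    using defs by blast+
  have S0: "S 0 \<omega> = 0" if "\<omega> \<in> space M" for \<omega>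
    using defs that by blast
  have "(\<integral>\<^sup>+\<omega>. ennreal ((S t \<omega> - S s \<omega>) powr q) \<partial>M)
      = (\<integral>\<^sup>+y. ennreal (y powr q) \<partial>distr M borel (\<lambda>\<omega>. S t \<omega> - S s \<omega>))"
    using meas st by (intro nn_integral_distr[symmetric]) auto
  also have "distr M borel (\<lambda>\<omega>. S t \<omega> - S s \<omega>) = distr M borel (S (t - s))"
    using defs st by blast
  also have "(\<integral>\<^sup>+y. ennreal (y powr q) \<partial>distr M borel (S (t - s))) = (\<integral>\<^sup>+\<omega>. ennreal (S (t - s) \<omega> powr q) \<partial>M)"
    using meas st by (intro nn_integral_distr) auto
  also have "\<dots> < \<infinity>"
  proof (rule laplace_moment_finite[OF P])
    show "0 \<le> S (t - s) \<omega>" if "\<omega> \<in> space M" for \<omega>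
      using subordinator_increment_nonneg[OF SS _ _ that, of 0 "t - s"] st S0[OF that] by simp
    show "prob_space.expectation M (\<lambda>\<omega>. exp (- l * S (t - s) \<omega>)) = exp (- (t - s) * l powr \<beta>)"
      if "l \<ge> 0" for l
      using defs st that by (simp add: algebra_simps)
  qed (use meas st q in auto)
  finally show ?thesis .
qed

text \<open>Along a nondecreasing chain of times starting at \<open>\<tau> 0 \<ge> 0\<close>, two distinct increments are
  independent, so the mixed moment \<open>E[x_a^q x_b^q]\<close> factorises and is finite for \<open>q < \<beta>\<close>.\<close>
lemma subordinator_increment_pair_moment:
  assumes SS: "stable_subordinator M S \<beta>"
    and \<tau>0: "0 \<le> \<tau> 0" and \<tau>mono: "\<And>i. i < n \<Longrightarrow> \<tau> i \<le> \<tau> (Suc i)"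
    and ab: "a < n" "b < n" "a \<noteq> b" and q: "0 < q" "q < \<beta>"
  shows "(\<integral>\<^sup>+\<omega>. ennreal (increments S \<tau> a \<omega> powr q) * ennreal (increments S \<tau> b \<omega> powr q) \<partial>M) < \<infinity>"
proof -
  note defs = SS[unfolded stable_subordinator_def]
  interpret prob_space M
    using defs by blast
  have \<tau>_nonneg: "0 \<le> \<tau> i" if "i \<le> n" for i
    using that by (induction i) (use \<tau>0 \<tau>mono in \<open>auto intro: order_trans\<close>)
  have moment: "(\<integral>\<^sup>+\<omega>. ennreal (increments S \<tau> i \<omega> powr q) \<partial>M) < \<infinity>" if "i < n" for i
    unfolding increments_def
    by (rule subordinator_increment_moment[OF SS _ \<tau>mono q]) (use \<tau>_nonneg that in auto)
  have indep: "indep_vars (\<lambda>_. borel) (increments S \<tau>) {..<n}"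
    using defs \<tau>0 \<tau>mono unfolding increments_def by blast
  then have "indep_vars (\<lambda>_. borel) (\<lambda>i \<omega>. ennreal (increments S \<tau> i \<omega> powr q)) {a, b}"
    by (rule indep_vars_compose2[OF indep_vars_subset]) (use ab in auto)
  then have "(\<integral>\<^sup>+\<omega>. (\<Prod>i\<in>{a,b}. ennreal (increments S \<tau> i \<omega> powr q)) \<partial>M)
      = (\<Prod>i\<in>{a,b}. \<integral>\<^sup>+\<omega>. ennreal (increments S \<tau> i \<omega> powr q) \<partial>M)"
    by (intro indep_vars_nn_integral) auto
  then have "(\<integral>\<^sup>+\<omega>. ennreal (increments S \<tau> a \<omega> powr q) * ennreal (increments S \<tau> b \<omega> powr q) \<partial>M)
      = (\<integral>\<^sup>+\<omega>. ennreal (increments S \<tau> a \<omega> powr q) \<partial>M) * (\<integral>\<^sup>+\<omega>. ennreal (increments S \<tau> b \<omega> powr q) \<partial>M)"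
    using ab by simp
  also have "\<dots> < \<infinity>"
    using moment[OF ab(1)] moment[OF ab(2)]
    by (simp add: ennreal_mult_eq_top_iff less_top[symmetric] infinity_ennreal_def)
  finally show ?thesis .
qed

section \<open>The dispersion bound\<close>

definition offdiag_sum :: "'i set \<Rightarrow> ('i \<Rightarrow> 'i \<Rightarrow> real) \<Rightarrow> real" where
  "offdiag_sum I f = (\<Sum>a\<in>I. \<Sum>b\<in>I. if a = b then 0 else f a b)"

lemma offdiag_sum_nonneg:
  "(\<And>a b. a \<in> I \<Longrightarrow> b \<in> I \<Longrightarrow> a \<noteq> b \<Longrightarrow> 0 \<le> f a b) \<Longrightarrow> 0 \<le> offdiag_sum I f"
  unfolding offdiag_sum_def by (intro sum_nonneg) auto

lemma offdiag_sum_mono: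
  "(\<And>a b. a \<in> I \<Longrightarrow> b \<in> I \<Longrightarrow> a \<noteq> b \<Longrightarrow> f a b \<le> g a b) \<Longrightarrow> offdiag_sum I f \<le> offdiag_sum I g"
  unfolding offdiag_sum_def by (intro sum_mono) auto

lemma weighted_dispersion_identity:
  fixes x :: "'i \<Rightarrow> real" and h :: "'i \<Rightarrow> 'v::real_inner"
  shows "(\<Sum>a\<in>I. \<Sum>b\<in>I. x a * x b * (norm (h a - h b))\<^sup>2)
     = 2 * (\<Sum>i\<in>I. x i) * (\<Sum>i\<in>I. x i * (norm (h i))\<^sup>2) - 2 * (norm (\<Sum>i\<in>I. x i *\<^sub>R h i))\<^sup>2"
proof -
  have dist_sq: "(norm (h a - h b))\<^sup>2 = (norm (h a))\<^sup>2 + (norm (h b))\<^sup>2 - 2 * inner (h a) (h b)" for a b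
    by (simp add: power2_norm_eq_inner inner_diff_left inner_diff_right inner_commute)
  have mean_sq: "(norm (\<Sum>i\<in>I. x i *\<^sub>R h i))\<^sup>2 = (\<Sum>a\<in>I. \<Sum>b\<in>I. x a * x b * inner (h a) (h b))"
    by (simp add: power2_norm_eq_inner inner_sum_left inner_sum_right sum_distrib_left mult_ac
        inner_commute)
  have "(\<Sum>a\<in>I. \<Sum>b\<in>I. x a * x b * (norm (h a - h b))\<^sup>2)
     = (\<Sum>a\<in>I. \<Sum>b\<in>I. (x a * (norm (h a))\<^sup>2) * x b)
       + (\<Sum>a\<in>I. \<Sum>b\<in>I. x a * (x b * (norm (h b))\<^sup>2))
       - 2 * (\<Sum>a\<in>I. \<Sum>b\<in>I. x a * x b * inner (h a) (h b))"
    unfolding dist_sq sum.distrib[symmetric] sum_subtractf[symmetric] sum_distrib_left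
    by (intro sum.cong refl) (simp add: algebra_simps)
  then show ?thesis
    unfolding mean_sq sum_product[symmetric] by (simp add: algebra_simps)
qed

lemma norm_diff_sq_le: "(norm (a - b))\<^sup>2 \<le> 2 * (norm a)\<^sup>2 + 2 * (norm (b::'v::real_inner))\<^sup>2"
proof -
  have "(norm (a - b))\<^sup>2 + (norm (a + b))\<^sup>2 = 2 * (norm a)\<^sup>2 + 2 * (norm b)\<^sup>2"
    by (simp add: power2_norm_eq_inner inner_diff_left inner_diff_right inner_add_left
        inner_add_right inner_commute)
  then show ?thesis
    using zero_le_power2[of "norm (a + b)"] by linarith
qed

text \<open>The weighted dispersion \<open>L = \<Sum> x_i |h_i|^2 - |\<Sum> x_i h_i|^2 / s\<close> of vectors of squared
  length at most \<open>G\<close> is nonnegative, and \<open>s L\<close> is controlled by the products of distinct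
  weights only: the diagonal terms of the identity above vanish.\<close>
lemma dispersion_bound:
  fixes x :: "'i \<Rightarrow> real" and h :: "'i \<Rightarrow> 'v::real_inner"
  assumes fin: "finite I" and x0: "\<And>i. i \<in> I \<Longrightarrow> 0 \<le> x i"
    and hG: "\<And>i. i \<in> I \<Longrightarrow> (norm (h i))\<^sup>2 \<le> G"
    and s: "s = (\<Sum>i\<in>I. x i)"
    and L: "L = (\<Sum>i\<in>I. x i * (norm (h i))\<^sup>2) - inverse s * (norm (\<Sum>i\<in>I. x i *\<^sub>R h i))\<^sup>2"
  shows "0 \<le> L" and "s * L \<le> 2 * G * offdiag_sum I (\<lambda>a b. x a * x b)"
proof -
  define Q where "Q = (\<Sum>a\<in>I. \<Sum>b\<in>I. x a * x b * (norm (h a - h b))\<^sup>2)"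
  have Q0: "0 \<le> Q"
    unfolding Q_def using x0 by (intro sum_nonneg) auto
  have "Q = (\<Sum>a\<in>I. \<Sum>b\<in>I. if a = b then 0 else x a * x b * (norm (h a - h b))\<^sup>2)"
    unfolding Q_def by (intro sum.cong refl) simp
  also have "\<dots> \<le> offdiag_sum I (\<lambda>a b. 4 * G * (x a * x b))"
    unfolding offdiag_sum_def
  proof (intro sum_mono)
    fix a b assume a: "a \<in> I" and b: "b \<in> I"
    have "(norm (h a - h b))\<^sup>2 \<le> 4 * G"
      using norm_diff_sq_le[of "h a" "h b"] hG[OF a] hG[OF b] by linarith
    then show "(if a = b then 0 else x a * x b * (norm (h a - h b))\<^sup>2)
        \<le> (if a = b then 0 else 4 * G * (x a * x b))"
      using x0[OF a] x0[OF b] by (simp add: mult_left_mono mult.commute)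
  qed
  also have "\<dots> = 4 * G * offdiag_sum I (\<lambda>a b. x a * x b)"
    unfolding offdiag_sum_def sum_distrib_left by (intro sum.cong refl) simp
  finally have Q_le: "Q \<le> 4 * G * offdiag_sum I (\<lambda>a b. x a * x b)" .
  have "0 \<le> L \<and> s * L \<le> 2 * G * offdiag_sum I (\<lambda>a b. x a * x b)"
  proof (cases "s = 0")
    case True
    then have xz: "\<And>i. i \<in> I \<Longrightarrow> x i = 0"
      using s x0 fin sum_nonneg_eq_0_iff by metis
    then have "offdiag_sum I (\<lambda>a b. x a * x b) = 0"
      unfolding offdiag_sum_def by (intro sum.neutral ballI) simp
    then show ?thesis
      using True xz unfolding L by simp
  next
    case False
    then have s0: "0 < s"
      using s x0 by (metis order_le_neq_trans sum_nonneg)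
    have sL: "s * L = Q / 2"
      unfolding Q_def weighted_dispersion_identity L using s0 s by (simp add: field_simps)
    then have "0 \<le> s * L"
      using Q0 by simp
    then have "0 \<le> L"
      using s0 by (simp add: zero_le_mult_iff)
    then show ?thesis
      using sL Q_le by simp
  qed
  then show "0 \<le> L" and "s * L \<le> 2 * G * offdiag_sum I (\<lambda>a b. x a * x b)"
    by auto
qed

text \<open>This trades
  a power of the total \<open>s\<close> in the denominator against the exponent of a product of two
  summands.\<close>
lemma pair_product_ratio_bound:
  fixes u v s m p :: real
  assumes u: "0 \<le> u" "u \<le> s" and v: "0 \<le> v" "v \<le> s" and p: "0 \<le> p" "p \<le> m"
  shows "(u * v) powr m / s powr (2 * (m - p)) \<le> u powr p * v powr p"
proof (cases "u * v = 0")
  case True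
  then have "(u * v) powr m / s powr (2 * (m - p)) = 0"
    by simp
  moreover have "0 \<le> u powr p * v powr p"
    by simp
  ultimately show ?thesis
    by linarith
next
  case False
  then have uv: "0 < u * v" and s0: "0 < s"
    using u v by (auto simp: less_le)
  have "(u * v) powr m = (u * v) powr p * (u * v) powr (m - p)"
    by (simp add: powr_add[symmetric])
  also have "\<dots> \<le> (u * v) powr p * (s * s) powr (m - p)"
    using u v p uv by (intro mult_left_mono powr_mono2 mult_mono) auto
  also have "\<dots> = (u powr p * v powr p) * s powr (2 * (m - p))"
    by (simp only: powr_mult powr_add[symmetric] mult_2)
  finally have "(u * v) powr m \<le> (u powr p * v powr p) * s powr (2 * (m - p))" .
  moreover have "0 < s powr (2 * (m - p))"
    using s0 by simp
  ultimately show ?thesis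
    by (simp add: pos_divide_le_eq)
qed

lemma dispersion_first_moment_bound:
  fixes x :: "'i \<Rightarrow> real"
  assumes fin: "finite I" and x0: "\<And>i. i \<in> I \<Longrightarrow> 0 \<le> x i" and s: "s = (\<Sum>i\<in>I. x i)"
    and G: "0 \<le> G" and sL: "s * L \<le> 2 * G * offdiag_sum I (\<lambda>a b. x a * x b)"
  shows "s powr (-1/2) * L \<le> 2 * G * offdiag_sum I (\<lambda>a b. x a powr (1/4) * x b powr (1/4))"
proof (cases "s = 0")
  case True
  have "0 \<le> offdiag_sum I (\<lambda>a b. x a powr (1/4) * x b powr (1/4))"
    by (intro offdiag_sum_nonneg) auto
  then show ?thesis
    using True G by simp
next
  case False
  then have s0: "0 < s"
    using s x0 by (metis order_le_neq_trans sum_nonneg)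
  have xs: "x i \<le> s" if "i \<in> I" for i
    unfolding s by (rule member_le_sum) (use that x0 fin in auto)
  have "s powr (-1/2) * L = (s * L) / s powr (3/2)"
    using s0 by (simp add: powr_minus_divide field_simps powr_add[symmetric] powr_mult_base)
  also have "\<dots> \<le> 2 * G * offdiag_sum I (\<lambda>a b. x a * x b) / s powr (3/2)"
    using sL s0 by (simp add: divide_right_mono)
  also have "\<dots> = 2 * G * offdiag_sum I (\<lambda>a b. (x a * x b) powr 1 / s powr (2 * (1 - 1/4)))"
    unfolding offdiag_sum_def times_divide_eq_right[symmetric] sum_divide_distrib
    using x0 by (intro arg_cong2[where f="(*)"] refl sum.cong) (auto simp: powr_one)
  also have "\<dots> \<le> 2 * G * offdiag_sum I (\<lambda>a b. x a powr (1/4) * x b powr (1/4))"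
    using G x0 xs by (intro mult_left_mono offdiag_sum_mono pair_product_ratio_bound) auto
  finally show ?thesis .
qed

lemma offdiag_sum_squared_le:
  "(offdiag_sum I f)\<^sup>2 \<le> real (card I * card I) * offdiag_sum I (\<lambda>a b. (f a b)\<^sup>2)"
proof -
  define q where "q a b = (if a = b then 0 else f a b)" for a b
  have "(\<Sum>a\<in>I. \<Sum>b\<in>I. q a b)\<^sup>2 \<le> (\<Sum>a\<in>I. (\<Sum>b\<in>I. q a b)\<^sup>2) * card I"
    by (rule sum_squared_le_sum_of_squares)
  also have "\<dots> \<le> (\<Sum>a\<in>I. (\<Sum>b\<in>I. (q a b)\<^sup>2) * card I) * card I"
    by (intro mult_right_mono sum_mono sum_squared_le_sum_of_squares) auto
  also have "\<dots> = ((\<Sum>a\<in>I. \<Sum>b\<in>I. (q a b)\<^sup>2) * card I) * card I"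
    by (simp only: sum_distrib_right)
  also have "\<dots> = real (card I * card I) * (\<Sum>a\<in>I. \<Sum>b\<in>I. (q a b)\<^sup>2)"
    by (simp add: mult_ac)
  also have "(\<Sum>a\<in>I. \<Sum>b\<in>I. (q a b)\<^sup>2) = offdiag_sum I (\<lambda>a b. (f a b)\<^sup>2)"
    unfolding offdiag_sum_def q_def by (intro sum.cong refl) simp
  finally show ?thesis
    unfolding offdiag_sum_def q_def .
qed

lemma dispersion_second_moment_bound:
  fixes x :: "'i \<Rightarrow> real"
  assumes fin: "finite I" and x0: "\<And>i. i \<in> I \<Longrightarrow> 0 \<le> x i" and s: "s = (\<Sum>i\<in>I. x i)"
    and G: "0 \<le> G" and L0: "0 \<le> L"
    and sL: "s * L \<le> 2 * G * offdiag_sum I (\<lambda>a b. x a * x b)"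
    and d: "0 \<le> d" "d < 4"
  shows "s powr (- d / 2) * L\<^sup>2 \<le> 4 * G\<^sup>2 * real (card I * card I) *
           offdiag_sum I (\<lambda>a b. x a powr ((4 - d)/4) * x b powr ((4 - d)/4))"
proof (cases "s = 0")
  case True
  have "0 \<le> offdiag_sum I (\<lambda>a b. x a powr ((4 - d)/4) * x b powr ((4 - d)/4))"
    by (intro offdiag_sum_nonneg) auto
  then show ?thesis
    using True G by simp
next
  case False
  define p where "p = (4 - d) / 4"
  define N where "N = real (card I * card I)"
  define D where "D = s powr (2 * (2 - p))"
  have s0: "0 < s"
    using False s x0 by (metis order_le_neq_trans sum_nonneg)
  have xs: "x i \<le> s" if "i \<in> I" for i
    unfolding s by (rule member_le_sum) (use that x0 fin in auto)
  have D0: "0 < D"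
    unfolding D_def using s0 by simp
  have "s powr (- d / 2) * L\<^sup>2 = (s * L)\<^sup>2 / D"
  proof -
    have "D = s powr (2 + d / 2)"
      unfolding D_def by (rule arg_cong[where f="\<lambda>e. s powr e"]) (simp add: p_def field_simps)
    also have "\<dots> = s\<^sup>2 * s powr (d / 2)"
      using s0 by (simp add: powr_add)
    finally have "D = s\<^sup>2 * s powr (d / 2)" .
    then show ?thesis
      using s0 by (simp add: powr_minus_divide power_mult_distrib)
  qed
  also have "\<dots> \<le> (2 * G * offdiag_sum I (\<lambda>a b. x a * x b))\<^sup>2 / D"
    using sL s0 L0 D0 by (intro divide_right_mono power_mono) auto
  also have "\<dots> \<le> 4 * G\<^sup>2 * N * (offdiag_sum I (\<lambda>a b. (x a * x b)\<^sup>2) / D)"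
  proof -
    have "(offdiag_sum I (\<lambda>a b. x a * x b))\<^sup>2 \<le> N * offdiag_sum I (\<lambda>a b. (x a * x b)\<^sup>2)"
      unfolding N_def by (rule offdiag_sum_squared_le)
    then have "4 * G\<^sup>2 * ((offdiag_sum I (\<lambda>a b. x a * x b))\<^sup>2 / D)
        \<le> 4 * G\<^sup>2 * (N * offdiag_sum I (\<lambda>a b. (x a * x b)\<^sup>2) / D)"
      using D0 by (intro mult_left_mono divide_right_mono) auto
    then show ?thesis
      by (simp add: power_mult_distrib mult.assoc)
  qed
  also have "\<dots> = 4 * G\<^sup>2 * N * offdiag_sum I (\<lambda>a b. (x a * x b) powr 2 / D)"
    unfolding offdiag_sum_def sum_divide_distrib using x0 by (intro arg_cong2[where f="(*)"] refl sum.cong) auto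
  also have "\<dots> \<le> 4 * G\<^sup>2 * N * offdiag_sum I (\<lambda>a b. x a powr p * x b powr p)"
    unfolding D_def N_def p_def
    using x0 xs d by (intro mult_left_mono offdiag_sum_mono pair_product_ratio_bound) auto
  finally show ?thesis
    unfolding p_def N_def .
qed

lemma offdiag_integral_finite:
  fixes x :: "'i \<Rightarrow> 'w \<Rightarrow> real"
  assumes I: "finite I" and xm: "\<And>i. i \<in> I \<Longrightarrow> x i \<in> borel_measurable M" and c: "0 \<le> c"
    and pair: "\<And>a b. a \<in> I \<Longrightarrow> b \<in> I \<Longrightarrow> a \<noteq> b \<Longrightarrow>
       (\<integral>\<^sup>+\<omega>. ennreal (x a \<omega> powr p) * ennreal (x b \<omega> powr p) \<partial>M) < \<infinity>"
  shows "(\<integral>\<^sup>+\<omega>. ennreal (c * offdiag_sum I (\<lambda>a b. x a \<omega> powr p * x b \<omega> powr p)) \<partial>M) < \<infinity>"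
proof -
  define f where "f a b = (\<lambda>\<omega>. ennreal (if a = b then 0 else x a \<omega> powr p * x b \<omega> powr p))" for a b
  have fm: "f a b \<in> borel_measurable M" if "a \<in> I" "b \<in> I" for a b
  proof -
    have [measurable]: "x a \<in> borel_measurable M" "x b \<in> borel_measurable M"
      using xm that by auto
    show ?thesis
      unfolding f_def by measurable
  qed
  have f_fin: "integral\<^sup>N M (f a b) < \<infinity>" if "a \<in> I" "b \<in> I" for a b
    using pair[OF that] by (cases "a = b") (simp_all add: f_def ennreal_mult)
  have "(\<integral>\<^sup>+\<omega>. ennreal (c * offdiag_sum I (\<lambda>a b. x a \<omega> powr p * x b \<omega> powr p)) \<partial>M)
      = (\<integral>\<^sup>+\<omega>. ennreal c * (\<Sum>a\<in>I. \<Sum>b\<in>I. f a b \<omega>) \<partial>M)"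
    using c by (intro nn_integral_cong) (simp add: offdiag_sum_def f_def ennreal_mult sum_nonneg)
  also have "\<dots> = ennreal c * (\<Sum>a\<in>I. \<Sum>b\<in>I. integral\<^sup>N M (f a b))"
    using fm by (simp add: nn_integral_cmult nn_integral_sum borel_measurable_sum del: sum_ennreal)
  also have "\<dots> < \<infinity>"
    using f_fin I
    by (simp add: ennreal_mult_eq_top_iff less_top[symmetric] infinity_ennreal_def)
  finally show ?thesis .
qed

section \<open>The functional L in terms of increments\<close>

text \<open>The times \<open>0 < lam_{j-1} - lam_j < \<dots> < lam_1 - lam_j < 1\<close> at which \<open>S\<close> is cut: the
  increments over \<open>[\<tau>_i, \<tau>_{i+1}]\<close>, \<open>i + 1 < j\<close>, are exactly the \<open>S*_{lam_k - lam_{k+1}}\<close>.\<close>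
definition partition_times :: "nat \<Rightarrow> (nat \<Rightarrow> real) \<Rightarrow> nat \<Rightarrow> real" where
  "partition_times j lam i = (if i = 0 then 0 else if i < j then lam (j - i) - lam j else 1)"

lemma partition_times_mono:
  assumes lam: "lam \<in> I_set j" and j: "2 \<le> j" and i: "i < j"
  shows "partition_times j lam i \<le> partition_times j lam (Suc i)"
proof -
  have lj: "0 < lam j" and l1: "lam 1 < 1" and dec: "\<And>k. k \<in> {1..<j} \<Longrightarrow> lam (Suc k) < lam k"
    using lam unfolding I_set_def by auto
  show ?thesis
  proof (cases "Suc i < j")
    case True
    then have "lam (Suc (j - Suc i)) < lam (j - Suc i)"
      using dec[of "j - Suc i"] by auto
    moreover have "Suc (j - Suc i) = j - i"
      using True by simp
    ultimately show ?thesis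
      using True unfolding partition_times_def by auto
  next
    case False
    then have "Suc i = j" "i \<noteq> 0" "j - i = 1"
      using i j by auto
    then show ?thesis
      using lj l1 unfolding partition_times_def by simp
  qed
qed

lemma partition_times_nonneg:
  assumes "lam \<in> I_set j" "2 \<le> j" "i \<le> j"
  shows "0 \<le> partition_times j lam i"
  using assms(3)
proof (induction i)
  case 0
  then show ?case
    by (simp add: partition_times_def)
next
  case (Suc i)
  then show ?case
    using partition_times_mono[OF assms(1,2), of i] by simp
qed

text \<open>The partial sums \<open>\<gamma>_k\<close> listed in the order of the increments; the last increment, over
  \<open>[lam_1 - lam_j, 1]\<close>, does not occur in \<open>L\<close> and gets the vector 0.\<close>
definition reversed_gamma :: "(nat \<Rightarrow> 'v::real_vector) \<Rightarrow> nat \<Rightarrow> nat \<Rightarrow> 'v" where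
  "reversed_gamma \<theta> j i = (if Suc i < j then gam \<theta> (j - Suc i) else 0)"

definition gamma_energy :: "(nat \<Rightarrow> 'v::real_normed_vector) \<Rightarrow> nat \<Rightarrow> real" where
  "gamma_energy \<theta> j = (\<Sum>k\<in>{1..<j}. (norm (gam \<theta> k))\<^sup>2)"

lemma sum_reverse_index:
  fixes F :: "nat \<Rightarrow> 'a::comm_monoid_add"
  shows "(\<Sum>k\<in>{1..<j}. F k) = (\<Sum>i<j. if Suc i < j then F (j - Suc i) else 0)"
proof -
  have "(\<Sum>i<j. if Suc i < j then F (j - Suc i) else 0) = (\<Sum>i\<in>{i\<in>{..<j}. Suc i < j}. F (j - Suc i))"
    by (rule sum.inter_filter[symmetric]) simp
  also have "{i\<in>{..<j}. Suc i < j} = {..<j - 1}"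
    by auto
  also have "(\<Sum>i\<in>{..<j - 1}. F (j - Suc i)) = (\<Sum>k\<in>{1..<j}. F k)"
    by (rule sum.reindex_bij_witness[where i="\<lambda>k. j - Suc k" and j="\<lambda>i. j - Suc i"]) auto
  finally show ?thesis
    by simp
qed

lemma Lalpha_as_dispersion:
  fixes S :: "real \<Rightarrow> 'w \<Rightarrow> real" and \<omega> :: 'w and j :: nat and lam :: "nat \<Rightarrow> real"
    and \<theta> :: "nat \<Rightarrow> real^'d"
  defines "x \<equiv> \<lambda>i. increments S (partition_times j lam) i \<omega>"
  assumes j: "1 \<le> j" and S0: "S 0 \<omega> = 0"
  shows "(\<Sum>i<j. x i) = S 1 \<omega>"
    and "Lalpha S j lam \<theta> \<omega> = (\<Sum>i<j. x i * (norm (reversed_gamma \<theta> j i))\<^sup>2)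
           - inverse (\<Sum>i<j. x i) * (norm (\<Sum>i<j. x i *\<^sub>R reversed_gamma \<theta> j i))\<^sup>2"
proof -
  show total: "(\<Sum>i<j. x i) = S 1 \<omega>"
    using sum_lessThan_telescope[of "\<lambda>i. S (partition_times j lam i) \<omega>" j] j S0
    unfolding x_def increments_def by (simp add: partition_times_def)
  have Sstar_x: "Sstar S j lam (j - Suc i) \<omega> = x i" if "Suc i < j" for i
  proof -
    have "partition_times j lam (Suc i) = lam (j - Suc i) - lam j"
      using that by (simp add: partition_times_def)
    moreover have "partition_times j lam i = lam (Suc (j - Suc i)) - lam j"
      using that by (cases "i = 0") (simp_all add: partition_times_def Suc_diff_Suc)
    ultimately show ?thesis
      unfolding Sstar_def x_def increments_def by simp
  qed
  have "(\<Sum>k=1..<j. Sstar S j lam k \<omega> * (norm (gam \<theta> k))\<^sup>2) = (\<Sum>i<j. x i * (norm (reversed_gamma \<theta> j i))\<^sup>2)"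
    unfolding sum_reverse_index by (intro sum.cong refl) (simp add: Sstar_x reversed_gamma_def)
  moreover have "(\<Sum>k=1..<j. Sstar S j lam k \<omega> *\<^sub>R gam \<theta> k) = (\<Sum>i<j. x i *\<^sub>R reversed_gamma \<theta> j i)"
    unfolding sum_reverse_index by (intro sum.cong refl) (simp add: Sstar_x reversed_gamma_def)
  ultimately show "Lalpha S j lam \<theta> \<omega> = (\<Sum>i<j. x i * (norm (reversed_gamma \<theta> j i))\<^sup>2)
           - inverse (\<Sum>i<j. x i) * (norm (\<Sum>i<j. x i *\<^sub>R reversed_gamma \<theta> j i))\<^sup>2"
    unfolding Lalpha_def total by simp
qed

section \<open>Moment bounds for L\<close>

lemma partition_increment_measurable:
  assumes SS: "stable_subordinator M S \<beta>" and j: "2 \<le> j" and lam: "lam \<in> I_set j" and i: "i < j"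
  shows "increments S (partition_times j lam) i \<in> borel_measurable M"
proof -
  have "\<And>t. 0 \<le> t \<Longrightarrow> S t \<in> borel_measurable M"
    using SS unfolding stable_subordinator_def by blast
  then have [measurable]: "S (partition_times j lam i) \<in> borel_measurable M"
    "S (partition_times j lam (Suc i)) \<in> borel_measurable M"
    using partition_times_nonneg[OF lam j] i by auto
  show ?thesis
    unfolding increments_def by measurable
qed

lemma partition_increment_pair_moment:
  assumes SS: "stable_subordinator M S \<beta>" and j: "2 \<le> j" and lam: "lam \<in> I_set j"
    and ab: "a < j" "b < j" "a \<noteq> b" and q: "0 < q" "q < \<beta>"
  shows "(\<integral>\<^sup>+\<omega>. ennreal (increments S (partition_times j lam) a \<omega> powr q)
            * ennreal (increments S (partition_times j lam) b \<omega> powr q) \<partial>M) < \<infinity>"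
  by (rule subordinator_increment_pair_moment[OF SS _ _ ab q])
     (use partition_times_mono[OF lam j] in \<open>auto simp: partition_times_def\<close>)

lemma partition_increment_nonneg:
  assumes SS: "stable_subordinator M S \<beta>" and j: "2 \<le> j" and lam: "lam \<in> I_set j"
    and i: "i < j" and \<omega>: "\<omega> \<in> space M"
  shows "0 \<le> increments S (partition_times j lam) i \<omega>"
  unfolding increments_def
  using partition_times_nonneg[OF lam j, of i] partition_times_mono[OF lam j i] i
  by (intro subordinator_increment_nonneg[OF SS _ _ \<omega>]) auto

lemma Lalpha_dispersion_bound:
  fixes \<theta> :: "nat \<Rightarrow> real^'d"
  assumes SS: "stable_subordinator M S \<beta>" and j: "2 \<le> j" and lam: "lam \<in> I_set j"
    and \<omega>: "\<omega> \<in> space M"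
  shows "0 \<le> Lalpha S j lam \<theta> \<omega>"
    and "S 1 \<omega> * Lalpha S j lam \<theta> \<omega> \<le> 2 * gamma_energy \<theta> j *
           offdiag_sum {..<j} (\<lambda>a b. increments S (partition_times j lam) a \<omega>
                                     * increments S (partition_times j lam) b \<omega>)"
proof -
  have S0: "S 0 \<omega> = 0"
    using SS \<omega> unfolding stable_subordinator_def by blast
  have hG: "(norm (reversed_gamma \<theta> j i))\<^sup>2 \<le> gamma_energy \<theta> j" if "i \<in> {..<j}" for i
  proof (cases "Suc i < j")
    case True
    have "(norm (gam \<theta> (j - Suc i)))\<^sup>2 \<le> gamma_energy \<theta> j"
      unfolding gamma_energy_def by (rule member_le_sum) (use True in auto)
    then show ?thesis
      using True by (simp add: reversed_gamma_def)
  qed (simp add: reversed_gamma_def gamma_energy_def sum_nonneg)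
  have x0: "0 \<le> increments S (partition_times j lam) i \<omega>" if "i \<in> {..<j}" for i
    using partition_increment_nonneg[OF SS j lam _ \<omega>] that by simp
  have "1 \<le> j"
    using j by simp
  note form = Lalpha_as_dispersion[where S=S and \<omega>=\<omega> and lam=lam, OF this S0]
  show "0 \<le> Lalpha S j lam \<theta> \<omega>"
    by (rule dispersion_bound(1)[where I="{..<j}" and h="reversed_gamma \<theta> j" and G="gamma_energy \<theta> j"])
       (simp_all add: x0 hG form)
  show "S 1 \<omega> * Lalpha S j lam \<theta> \<omega> \<le> 2 * gamma_energy \<theta> j *
           offdiag_sum {..<j} (\<lambda>a b. increments S (partition_times j lam) a \<omega>
                                     * increments S (partition_times j lam) b \<omega>)"
    by (rule dispersion_bound(2)[where I="{..<j}" and h="reversed_gamma \<theta> j" and G="gamma_energy \<theta> j"])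
       (simp_all add: x0 hG form)
qed

text \<open>Part (i): \<open>E[S_1^(-1/2) L] < \<infinity>\<close> once \<open>1/4 < \<alpha>/2\<close>.\<close>
lemma Lalpha_first_moment_finite:
  fixes \<theta> :: "nat \<Rightarrow> real^'d"
  assumes SS: "stable_subordinator M S (\<alpha> / 2)" and j: "2 \<le> j" and lam: "lam \<in> I_set j"
    and \<alpha>: "1/2 < \<alpha>"
  shows "(\<integral>\<^sup>+ \<omega>. ennreal (S 1 \<omega> powr (-1/2) * Lalpha S j lam \<theta> \<omega>) \<partial>M) < \<infinity>"
proof -
  define x where "x = increments S (partition_times j lam)"
  have S0: "\<And>\<omega>. \<omega> \<in> space M \<Longrightarrow> S 0 \<omega> = 0"
    using SS unfolding stable_subordinator_def by blast
  have G: "0 \<le> gamma_energy \<theta> j"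
    unfolding gamma_energy_def by (simp add: sum_nonneg)
  have "(\<integral>\<^sup>+ \<omega>. ennreal (S 1 \<omega> powr (-1/2) * Lalpha S j lam \<theta> \<omega>) \<partial>M)
      \<le> (\<integral>\<^sup>+\<omega>. ennreal (2 * gamma_energy \<theta> j *
            offdiag_sum {..<j} (\<lambda>a b. x a \<omega> powr (1/4) * x b \<omega> powr (1/4))) \<partial>M)"
  proof (intro nn_integral_mono ennreal_leI)
    fix \<omega> assume \<omega>: "\<omega> \<in> space M"
    show "S 1 \<omega> powr (-1/2) * Lalpha S j lam \<theta> \<omega>
        \<le> 2 * gamma_energy \<theta> j * offdiag_sum {..<j} (\<lambda>a b. x a \<omega> powr (1/4) * x b \<omega> powr (1/4))"
      unfolding x_def
      by (rule dispersion_first_moment_bound[OF _ _ Lalpha_as_dispersion(1)[symmetric] G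
            Lalpha_dispersion_bound(2)[OF SS j lam \<omega>]])
         (use partition_increment_nonneg[OF SS j lam _ \<omega>] S0[OF \<omega>] j in auto)
  qed
  also have "\<dots> < \<infinity>"
    unfolding x_def using G \<alpha>
    by (intro offdiag_integral_finite partition_increment_measurable[OF SS j lam]
        partition_increment_pair_moment[OF SS j lam]) auto
  finally show ?thesis .
qed

text \<open>Part (ii): \<open>E[S_1^(-d/2) L^2] < \<infinity>\<close> for real \<open>0 \<le> d < 4\<close> once \<open>(4 - d)/4 < \<alpha>/2\<close>.\<close>
lemma Lalpha_second_moment_finite:
  fixes \<theta> :: "nat \<Rightarrow> real^'d"
  assumes SS: "stable_subordinator M S (\<alpha> / 2)" and j: "2 \<le> j" and lam: "lam \<in> I_set j"
    and d: "0 \<le> d" "d < 4" and \<alpha>: "4 - d < 2 * \<alpha>"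
  shows "(\<integral>\<^sup>+ \<omega>. ennreal (S 1 \<omega> powr (- d / 2) * (Lalpha S j lam \<theta> \<omega>)\<^sup>2) \<partial>M) < \<infinity>"
proof -
  define x where "x = increments S (partition_times j lam)"
  define p where "p = (4 - d) / 4"
  define C where "C = 4 * (gamma_energy \<theta> j)\<^sup>2 * real (card {..<j} * card {..<j})"
  have S0: "\<And>\<omega>. \<omega> \<in> space M \<Longrightarrow> S 0 \<omega> = 0"
    using SS unfolding stable_subordinator_def by blast
  have G: "0 \<le> gamma_energy \<theta> j"
    unfolding gamma_energy_def by (simp add: sum_nonneg)
  have "(\<integral>\<^sup>+ \<omega>. ennreal (S 1 \<omega> powr (- d / 2) * (Lalpha S j lam \<theta> \<omega>)\<^sup>2) \<partial>M)
      \<le> (\<integral>\<^sup>+\<omega>. ennreal (C * offdiag_sum {..<j} (\<lambda>a b. x a \<omega> powr p * x b \<omega> powr p)) \<partial>M)"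
  proof (intro nn_integral_mono ennreal_leI)
    fix \<omega> assume \<omega>: "\<omega> \<in> space M"
    show "S 1 \<omega> powr (- d / 2) * (Lalpha S j lam \<theta> \<omega>)\<^sup>2
        \<le> C * offdiag_sum {..<j} (\<lambda>a b. x a \<omega> powr p * x b \<omega> powr p)"
      unfolding x_def p_def C_def
      by (rule dispersion_second_moment_bound[OF _ _ Lalpha_as_dispersion(1)[symmetric] G
            Lalpha_dispersion_bound[OF SS j lam \<omega>] d])
         (use partition_increment_nonneg[OF SS j lam _ \<omega>] S0[OF \<omega>] j in auto)
  qed
  also have "\<dots> < \<infinity>"
    unfolding x_def C_def p_def using G d \<alpha>
    by (intro offdiag_integral_finite partition_increment_measurable[OF SS j lam]
        partition_increment_pair_moment[OF SS j lam]) auto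
  finally show ?thesis .
qed

theorem corollary7p2:
  fixes M :: "'w measure" and S :: "real \<Rightarrow> 'w \<Rightarrow> real" and \<alpha> :: real
    and j :: nat and lam :: "nat \<Rightarrow> real" and \<theta> :: "nat \<Rightarrow> real^'d"
  assumes "stable_subordinator M S (\<alpha> / 2)"
    and "j \<ge> 2"
    and "lam \<in> I_set j"
  shows "(CARD('d) = 1 \<and> 1/2 < \<alpha> \<and> \<alpha> < 2 \<longrightarrow>
           (\<integral>\<^sup>+ \<omega>. ennreal (S 1 \<omega> powr (-1/2) * Lalpha S j lam \<theta> \<omega>) \<partial>M) < \<infinity>)
       \<and> ((CARD('d) = 1 \<and> 3/2 < \<alpha> \<and> \<alpha> < 2) \<or> (CARD('d) = 2 \<and> 1 < \<alpha> \<and> \<alpha> < 2)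
            \<or> (CARD('d) = 3 \<and> 1/2 < \<alpha> \<and> \<alpha> < 2) \<longrightarrow>
           (\<integral>\<^sup>+ \<omega>. ennreal (S 1 \<omega> powr (- real CARD('d) / 2) * (Lalpha S j lam \<theta> \<omega>)\<^sup>2) \<partial>M) < \<infinity>)"
proof (intro conjI impI)
  show "(\<integral>\<^sup>+ \<omega>. ennreal (S 1 \<omega> powr (-1/2) * Lalpha S j lam \<theta> \<omega>) \<partial>M) < \<infinity>"
    if "CARD('d) = 1 \<and> 1/2 < \<alpha> \<and> \<alpha> < 2"
    using Lalpha_first_moment_finite[OF assms] that by simp
  show "(\<integral>\<^sup>+ \<omega>. ennreal (S 1 \<omega> powr (- real CARD('d) / 2) * (Lalpha S j lam \<theta> \<omega>)\<^sup>2) \<partial>M) < \<infinity>"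
    if "(CARD('d) = 1 \<and> 3/2 < \<alpha> \<and> \<alpha> < 2) \<or> (CARD('d) = 2 \<and> 1 < \<alpha> \<and> \<alpha> < 2)
          \<or> (CARD('d) = 3 \<and> 1/2 < \<alpha> \<and> \<alpha> < 2)"
  proof (rule Lalpha_second_moment_finite[OF assms])
    show "0 \<le> real CARD('d)" "real CARD('d) < 4" "4 - real CARD('d) < 2 * \<alpha>"
      using that by auto
  qed
qed

end
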